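(* Let $e_1,e_2$ be composable forward events of the LTSI of CCSK$^{\mathrm P}$. Then $e_1<e_2$ if and only if $e_1\otimes e_2$.
   Context: Names $\mathsf N$ with bijection $\overline\cdot$ onto disjoint co-names; $\mathsf L=\mathsf N\cup\overline{\mathsf N}\cup\{\tau\}$ ($\alpha$ over $\mathsf L$, $\lambda$ over $\mathsf L\setminus\{\tau\}$); keys $\mathsf K$ denumerable. CCSK processes $X::=\mathbf 0\mid\alpha.X\mid X\backslash\lambda\mid X+Y\mid X|Y\mid\alpha[k].X$; $\mathrm{keys}(X)$ keys in $X$; standard means no keys. Directions $D\in\{\mathrm L,\mathrm R\}$, $\bar{\mathrm L}=\mathrm R$, $\bar{\mathrm R}=\mathrm L$. Proof keyed labels $\theta::=\upsilon\alpha[k]\mid\upsilon\langle\upsilon_1\lambda[k],\upsilon_2\overline\lambda[k]\rangle$ ($\upsilon,\upsilon_i\in\{|_{\mathrm L},|_{\mathrm R},+_{\mathrm L},+_{\mathrm R}\}^*$), $\ell(\upsilon\alpha[k])=\alpha$, $\ell(\upsilon\langle\cdots\rangle)=\tau$, $\mathrm{key}(\theta)=k$. Forward CCSK$^{\mathrm P}$ transitions: least relation closed under (act) $\alpha.X\xrightarrow{\alpha[k]}\alpha[k].X$ if $\mathrm{keys}(X)=\emptyset$; (pre) $X\xrightarrow\theta X',\mathrm{key}(\theta)\ne k\Rightarrow\alpha[k].X\xrightarrow\theta\alpha[k].X'$; (res) $X\xrightarrow\theta X',\ell(\theta)\notin\{\lambda,\overline\lambda\}\Rightarrow X\backslash\lambda\xrightarrow\theta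 X'\backslash\lambda$; (par) $X\xrightarrow\theta X',\mathrm{key}(\theta)\notin\mathrm{keys}(Y)\Rightarrow X|Y\xrightarrow{|_{\mathrm L}\theta}X'|Y$, $Y|X\xrightarrow{|_{\mathrm R}\theta}Y|X'$; (syn) $X\xrightarrow{\upsilon_1\lambda[k]}X',Y\xrightarrow{\upsilon_2\overline\lambda[k]}Y'\Rightarrow X|Y\xrightarrow{\langle\upsilon_1\lambda[k],\upsilon_2\overline\lambda[k]\rangle}X'|Y'$; (sum) $X\xrightarrow\theta X',\mathrm{keys}(Y)=\emptyset\Rightarrow X+Y\xrightarrow{+_{\mathrm L}\theta}X'+Y$, $Y+X\xrightarrow{+_{\mathrm R}\theta}Y+X'$. Backward transitions are converses; $\bar t$ the inverse. Paths: sequences of composable transitions; rooted if the source cannot perform a backward transition; only processes reachable from standard ones are considered. Connected: path from source of one to target of the other. Relations on proof labels (least closed under rules; "prefix" = form $\beta[k']$; $\theta_{\mathrm L},\theta_{\mathrm R}$ components of a synchronisation label): Connectivity $\frown$: (A1) $\alpha[k]\frown\theta$; (A2) $\theta\frown\alpha[k]$ if $\theta$ not a prefix; (P1) $|_D\theta\frown|_D\theta'$ if $\theta\frown\theta'$; (P2) $|_D\theta\frown|_{\bar D}\theta'$; (C1) $+_D\theta\frown+_D\theta'$ if $\theta\frown\theta'$; (C2) $+_D\theta\frown+_{\bar D}\theta'$; (S1) $|_D\theta\frown\langle\theta_{\mathrm L},\theta_{\mathrm R}\rangle$ if $\theta\frown\theta_D$; (S2) $\langle\theta_{\mathrm L},\theta_{\mathrm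 R}\rangle\frown|_D\theta$ if $\theta_D\frown\theta$; (S3) componentwise. Dependence $\otimes$: A1, A2, C1, C2, P1, S1, S2 with $\otimes$ for $\frown$; (P2$_k$) $|_D\theta\otimes|_{\bar D}\theta'$ if equal keys; (S3) $\langle\theta_1,\theta_2\rangle\otimes\langle\theta_1',\theta_2'\rangle$ if for some $i\ne j$, $\theta_i\otimes\theta_i'$ and $\theta_j\frown\theta_j'$. Independence $\iota$: C1, P1, S1, S2, S3 with $\iota$ for $\frown$, and (P2$_k$) $|_D\theta\mathrel\iota|_{\bar D}\theta'$ if keys differ. On transitions: $t\mathrel\iota u$ iff connected and labels $\iota$. Event equivalence $\sim$: smallest equivalence with $t\sim t'$ whenever $t:P\to Q$, $u:P\to R$, $u':Q\to S$, $t':R\to S$ ($u'$ with label/direction of $u$, $t'$ of $t$) and $t\mathrel\iota u$; events are classes $[t]$; forward events are classes of forward transitions; $\bar e=[\bar t]$. $\sharp(\varepsilon,e)=0$, $\sharp(tr,e)=\sharp(r,e)+1$ if $t\in e$, $-1$ if $t\in\bar e$, unchanged otherwise. For forward events, $e\le e'$ iff every rooted path $r$ with $\sharp(r,e')>0$ has $\sharp(r,e)>0$; $e<e'$ iff $e\le e'$ and $e\ne e'$. Events $e_1,e_2$ are composable if some $t_1\in e_1$ is composable with some $t_2\in e_2$; $e_1\otimes e_2$ iff some $t_1\in e_1$, $t_2\in e_2$ have labels satisfying $\otimes$. *)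

theory Defs
  imports Main
begin

datatype 'n vis = Nm 'n | Co 'n
datatype 'n act = Vis "'n vis" | Tau

fun vbar :: "'n vis \<Rightarrow> 'n vis" where
  "vbar (Nm a) = Co a" | "vbar (Co a) = Nm a"

type_synonym key = nat

datatype 'n proc =
    Nil0
  | Pre "'n act" "'n proc"
  | Res "'n proc" "'n vis"
  | Sum "'n proc" "'n proc"
  | Par "'n proc" "'n proc"
  | Keyed "'n act" key "'n proc"

fun keys :: "'n proc \<Rightarrow> key set" where
  "keys Nil0 = {}"
| "keys (Pre a X) = keys X"
| "keys (Res X l) = keys X"
| "keys (Sum X Y) = keys X \<union> keys Y"
| "keys (Par X Y) = keys X \<union> keys Y"
| "keys (Keyed a k X) = insert k (keys X)"

definition standard :: "'n proc \<Rightarrow> bool" where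
  "standard X \<longleftrightarrow> keys X = {}"

datatype dir = DL | DR

fun dbar :: "dir \<Rightarrow> dir" where "dbar DL = DR" | "dbar DR = DL"

text \<open>A proof keyed label upsilon alpha[k] is encoded as the operators of upsilon
 applied (outermost first) to PAct alpha k; a synchronisation label
 upsilon<theta_L, theta_R> as the operators of upsilon applied to PSyn theta_L theta_R.\<close>

datatype 'n plab =
    PAct "'n act" key
  | PPar dir "'n plab"
  | PSum dir "'n plab"
  | PSyn "'n plab" "'n plab"

fun lab :: "'n plab \<Rightarrow> 'n act" where
  "lab (PAct a k) = a"
| "lab (PPar d t) = lab t"
| "lab (PSum d t) = lab t"
| "lab (PSyn t1 t2) = Tau"

fun pkey :: "'n plab \<Rightarrow> key" where
  "pkey (PAct a k) = k"
| "pkey (PPar d t) = pkey t"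
| "pkey (PSum d t) = pkey t"
| "pkey (PSyn t1 t2) = pkey t1"

definition is_prefix :: "'n plab \<Rightarrow> bool" where
  "is_prefix t \<longleftrightarrow> (\<exists>a k. t = PAct a k)"

fun comp :: "dir \<Rightarrow> 'n plab \<Rightarrow> 'n plab \<Rightarrow> 'n plab" where
  "comp DL tL tR = tL" | "comp DR tL tR = tR"

inductive fwd :: "'n proc \<Rightarrow> 'n plab \<Rightarrow> 'n proc \<Rightarrow> bool" where
  act: "keys X = {} \<Longrightarrow> fwd (Pre a X) (PAct a k) (Keyed a k X)"
| pre: "fwd X t X' \<Longrightarrow> pkey t \<noteq> k \<Longrightarrow> fwd (Keyed a k X) t (Keyed a k X')"
| res: "fwd X t X' \<Longrightarrow> lab t \<noteq> Vis l \<Longrightarrow> lab t \<noteq> Vis (vbar l)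
        \<Longrightarrow> fwd (Res X l) t (Res X' l)"
| parL: "fwd X t X' \<Longrightarrow> pkey t \<notin> keys Y \<Longrightarrow> fwd (Par X Y) (PPar DL t) (Par X' Y)"
| parR: "fwd X t X' \<Longrightarrow> pkey t \<notin> keys Y \<Longrightarrow> fwd (Par Y X) (PPar DR t) (Par Y X')"
| syn: "fwd X t1 X' \<Longrightarrow> fwd Y t2 Y' \<Longrightarrow> lab t1 = Vis l \<Longrightarrow> lab t2 = Vis (vbar l)
        \<Longrightarrow> pkey t1 = k \<Longrightarrow> pkey t2 = k
        \<Longrightarrow> fwd (Par X Y) (PSyn t1 t2) (Par X' Y')"
| sumL: "fwd X t X' \<Longrightarrow> keys Y = {} \<Longrightarrow> fwd (Sum X Y) (PSum DL t) (Sum X' Y)"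
| sumR: "fwd X t X' \<Longrightarrow> keys Y = {} \<Longrightarrow> fwd (Sum Y X) (PSum DR t) (Sum Y X')"

definition step :: "'n proc \<Rightarrow> 'n proc \<Rightarrow> bool" where
  "step P Q \<longleftrightarrow> (\<exists>t. fwd P t Q \<or> fwd Q t P)"

definition reachable :: "'n proc \<Rightarrow> bool" where
  "reachable P \<longleftrightarrow> (\<exists>S. standard S \<and> step\<^sup>*\<^sup>* S P)"

text \<open>A transition: source, proof label, target, and direction (True = forward).\<close>
datatype 'n tr = Tr (src: "'n proc") (lbl: "'n plab") (tgt: "'n proc") (fw: bool)

definition valid :: "'n tr \<Rightarrow> bool" where
  "valid t \<longleftrightarrow> reachable (src t) \<and>
     (if fw t then fwd (src t) (lbl t) (tgt t) else fwd (tgt t) (lbl t) (src t))"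

fun inv_tr :: "'n tr \<Rightarrow> 'n tr" where
  "inv_tr (Tr P t Q b) = Tr Q t P (\<not> b)"

definition is_path :: "'n tr list \<Rightarrow> bool" where
  "is_path r \<longleftrightarrow> (\<forall>t\<in>set r. valid t) \<and>
     (\<forall>i. Suc i < length r \<longrightarrow> tgt (r ! i) = src (r ! Suc i))"

definition rooted :: "'n proc \<Rightarrow> bool" where
  "rooted P \<longleftrightarrow> \<not> (\<exists>t Q. fwd Q t P)"

definition rooted_path :: "'n tr list \<Rightarrow> bool" where
  "rooted_path r \<longleftrightarrow> r \<noteq> [] \<and> is_path r \<and> rooted (src (hd r))"

definition connected :: "'n tr \<Rightarrow> 'n tr \<Rightarrow> bool" where
  "connected t u \<longleftrightarrow> step\<^sup>*\<^sup>* (src t) (tgt u)"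

inductive conn :: "'n plab \<Rightarrow> 'n plab \<Rightarrow> bool" where
  A1: "conn (PAct a k) t"
| A2: "\<not> is_prefix t \<Longrightarrow> conn t (PAct a k)"
| P1: "conn t t' \<Longrightarrow> conn (PPar D t) (PPar D t')"
| P2: "conn (PPar D t) (PPar (dbar D) t')"
| C1: "conn t t' \<Longrightarrow> conn (PSum D t) (PSum D t')"
| C2: "conn (PSum D t) (PSum (dbar D) t')"
| S1: "conn t (comp D tL tR) \<Longrightarrow> conn (PPar D t) (PSyn tL tR)"
| S2: "conn (comp D tL tR) t \<Longrightarrow> conn (PSyn tL tR) (PPar D t)"
| S3: "conn tL tL' \<Longrightarrow> conn tR tR' \<Longrightarrow> conn (PSyn tL tR) (PSyn tL' tR')"

inductive dep :: "'n plab \<Rightarrow> 'n plab \<Rightarrow> bool" where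
  A1: "dep (PAct a k) t"
| A2: "\<not> is_prefix t \<Longrightarrow> dep t (PAct a k)"
| P1: "dep t t' \<Longrightarrow> dep (PPar D t) (PPar D t')"
| P2k: "pkey t = pkey t' \<Longrightarrow> dep (PPar D t) (PPar (dbar D) t')"
| C1: "dep t t' \<Longrightarrow> dep (PSum D t) (PSum D t')"
| C2: "dep (PSum D t) (PSum (dbar D) t')"
| S1: "dep t (comp D tL tR) \<Longrightarrow> dep (PPar D t) (PSyn tL tR)"
| S2: "dep (comp D tL tR) t \<Longrightarrow> dep (PSyn tL tR) (PPar D t)"
| S3L: "dep tL tL' \<Longrightarrow> conn tR tR' \<Longrightarrow> dep (PSyn tL tR) (PSyn tL' tR')"
| S3R: "dep tR tR' \<Longrightarrow> conn tL tL' \<Longrightarrow> dep (PSyn tL tR) (PSyn tL' tR')"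

inductive ind :: "'n plab \<Rightarrow> 'n plab \<Rightarrow> bool" where
  C1: "ind t t' \<Longrightarrow> ind (PSum D t) (PSum D t')"
| P1: "ind t t' \<Longrightarrow> ind (PPar D t) (PPar D t')"
| P2k: "pkey t \<noteq> pkey t' \<Longrightarrow> ind (PPar D t) (PPar (dbar D) t')"
| S1: "ind t (comp D tL tR) \<Longrightarrow> ind (PPar D t) (PSyn tL tR)"
| S2: "ind (comp D tL tR) t \<Longrightarrow> ind (PSyn tL tR) (PPar D t)"
| S3: "ind tL tL' \<Longrightarrow> ind tR tR' \<Longrightarrow> ind (PSyn tL tR) (PSyn tL' tR')"

definition tr_ind :: "'n tr \<Rightarrow> 'n tr \<Rightarrow> bool" where
  "tr_ind t u \<longleftrightarrow> connected t u \<and> ind (lbl t) (lbl u)"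

text \<open>The square generating event equivalence: t : P \<rightarrow> Q, u : P \<rightarrow> R,
 u' : Q \<rightarrow> S, t' : R \<rightarrow> S, with u' a copy of u and t' a copy of t, and t \<iota> u.\<close>
definition sq :: "'n tr \<Rightarrow> 'n tr \<Rightarrow> bool" where
  "sq t t' \<longleftrightarrow> (\<exists>u u'. valid t \<and> valid u \<and> valid u' \<and> valid t' \<and>
      src u = src t \<and> src u' = tgt t \<and> src t' = tgt u \<and> tgt u' = tgt t' \<and>
      lbl u' = lbl u \<and> fw u' = fw u \<and> lbl t' = lbl t \<and> fw t' = fw t \<and>
      tr_ind t u)"

inductive ev_eq :: "'n tr \<Rightarrow> 'n tr \<Rightarrow> bool" where
  refl: "valid t \<Longrightarrow> ev_eq t t"
| sq: "sq t t' \<Longrightarrow> ev_eq t t'"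
| sym: "ev_eq t t' \<Longrightarrow> ev_eq t' t"
| trans: "ev_eq t t' \<Longrightarrow> ev_eq t' t'' \<Longrightarrow> ev_eq t t''"

definition cls :: "'n tr \<Rightarrow> 'n tr set" where
  "cls t = {u. ev_eq t u}"

definition is_event :: "'n tr set \<Rightarrow> bool" where
  "is_event e \<longleftrightarrow> (\<exists>t. valid t \<and> e = cls t)"

definition fwd_event :: "'n tr set \<Rightarrow> bool" where
  "fwd_event e \<longleftrightarrow> (\<exists>t. valid t \<and> fw t \<and> e = cls t)"

definition ev_bar :: "'n tr set \<Rightarrow> 'n tr set" where
  "ev_bar e = (\<Union>t\<in>e. cls (inv_tr t))"

definition sharp :: "'n tr list \<Rightarrow> 'n tr set \<Rightarrow> int" where
  "sharp r e = sum_list (map (\<lambda>t. if t \<in> e then 1 else if t \<in> ev_bar e then -1 else 0) r)"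

definition ev_le :: "'n tr set \<Rightarrow> 'n tr set \<Rightarrow> bool" where
  "ev_le e e' \<longleftrightarrow> (\<forall>r. rooted_path r \<longrightarrow> sharp r e' > 0 \<longrightarrow> sharp r e > 0)"

definition ev_less :: "'n tr set \<Rightarrow> 'n tr set \<Rightarrow> bool" where
  "ev_less e e' \<longleftrightarrow> ev_le e e' \<and> e \<noteq> e'"

definition ev_composable :: "'n tr set \<Rightarrow> 'n tr set \<Rightarrow> bool" where
  "ev_composable e1 e2 \<longleftrightarrow> (\<exists>t1\<in>e1. \<exists>t2\<in>e2. tgt t1 = src t2)"

definition ev_dep :: "'n tr set \<Rightarrow> 'n tr set \<Rightarrow> bool" where
  "ev_dep e1 e2 \<longleftrightarrow> (\<exists>t1\<in>e1. \<exists>t2\<in>e2. dep (lbl t1) (lbl t2))"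

end

theory Submission
  imports Defs
begin

text \<open>For a process P and a key k, the causal cut of P at k keeps exactly the keyed prefixes
  whose keys causally precede k (lie above k, transitively) and turns all others back into plain
  prefixes. Two forward transitions with key k belong to the same event iff their targets have
  the same causal cut at k: squares preserve the cut and, conversely, by the backward diamond all
  keys outside the causal past of k can be undone through squares, after which backward
  determinism identifies the two transitions. So whether the event e of a transition has occurred
  in a process is a property of the process alone, the count of e along a path telescopes, and
  along a rooted path it is 1 or 0 according to whether e has occurred at its end.

  If t1 and t2 are dependent, the key of t1 lies directly above that of t2 in the target, so the
  cut at the key of t2 determines the cut at the key of t1: whenever e2 has occurred, so has e1.
  Otherwise t1 and t2 can be swapped, giving a rooted path at whose end e2 has occurred and e1
  has not.\<close>

lemma finite_keys: "finite (keys P)"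
  by (induction P) auto

lemma fwd_keys: "fwd P t Q \<Longrightarrow> pkey t \<notin> keys P \<and> keys Q = insert (pkey t) (keys P)"
  by (induction rule: fwd.induct) auto

lemma fwd_key_in_tgt: "fwd P t Q \<Longrightarrow> pkey t \<in> keys Q"
  using fwd_keys by blast

fun wf_label :: "'n plab \<Rightarrow> bool" where
  "wf_label (PAct a k) = True"
| "wf_label (PPar d t) = wf_label t"
| "wf_label (PSum d t) = wf_label t"
| "wf_label (PSyn a b) = (wf_label a \<and> wf_label b \<and> pkey a = pkey b)"

lemma fwd_wf_label: "fwd P t Q \<Longrightarrow> wf_label t"
  by (induction rule: fwd.induct) auto

lemma ind_pkey_neq: "ind t t' \<Longrightarrow> wf_label t \<Longrightarrow> wf_label t' \<Longrightarrow> pkey t \<noteq> pkey t'"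
proof (induction rule: ind.induct)
  case (S1 t D tL tR) then show ?case by (cases D) auto
next
  case (S2 D tL tR t) then show ?case by (cases D) auto
qed auto

inductive_cases fwd_KeyedE: "fwd (Keyed a k X) t S"
inductive_cases fwd_ResE: "fwd (Res X l) t S"
inductive_cases fwd_SumE[consumes 1, case_names left right]: "fwd (Sum X Y) t S"
inductive_cases fwd_ParE[consumes 1, case_names left right sync]: "fwd (Par X Y) t S"
inductive_cases fwd_into_KeyedE[consumes 1, case_names prefix inner]: "fwd S t (Keyed a k X)"
inductive_cases fwd_into_ResE[consumes 1, case_names inner]: "fwd S t (Res X l)"
inductive_cases fwd_into_SumE[consumes 1, case_names left right]: "fwd S t (Sum X Y)"
inductive_cases fwd_into_ParE[consumes 1, case_names left right sync]: "fwd S t (Par X Y)"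

lemma dep_PPar_PPar:
  "dep (PPar D t) (PPar D' t') \<longleftrightarrow> (D' = D \<and> dep t t') \<or> (D' = dbar D \<and> pkey t = pkey t')"
  by (auto elim: dep.cases intro: dep.intros simp: is_prefix_def)

lemma dep_PSum_PSum: "dep (PSum D t) (PSum D' t') \<longleftrightarrow> (D' = D \<and> dep t t') \<or> D' = dbar D"
  by (auto elim: dep.cases intro: dep.intros simp: is_prefix_def)

lemma dep_PPar_PSyn: "dep (PPar D t) (PSyn a b) \<longleftrightarrow> dep t (comp D a b)"
  by (auto elim: dep.cases intro: dep.intros simp: is_prefix_def)

lemma dep_PSyn_PPar: "dep (PSyn a b) (PPar D t) \<longleftrightarrow> dep (comp D a b) t"
  by (auto elim: dep.cases intro: dep.intros simp: is_prefix_def)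

lemma dep_PSyn_PSyn: "dep (PSyn a b) (PSyn c d) \<longleftrightarrow> (dep a c \<and> conn b d) \<or> (dep b d \<and> conn a c)"
  by (auto elim: dep.cases intro: dep.intros simp: is_prefix_def)

lemmas dep_simps = dep_PPar_PPar dep_PSum_PSum dep_PPar_PSyn dep_PSyn_PPar dep_PSyn_PSyn dep.A1

text \<open>Instances for a concrete direction, in which comp and dbar are evaluated, so that
  they apply to concrete labels.\<close>

lemmas conn_PSyn_PPar = conn.S2[where D=DL, simplified] conn.S2[where D=DR, simplified]

lemmas ind_dir_intros =
  ind.S1[where D=DL, simplified] ind.S1[where D=DR, simplified]
  ind.S2[where D=DL, simplified] ind.S2[where D=DR, simplified]
  ind.P2k[where D=DL, simplified] ind.P2k[where D=DR, simplified]

lemma fwd_fwd_conn: "fwd P t1 Q \<Longrightarrow> fwd Q t2 S \<Longrightarrow> conn t1 t2"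
proof (induction arbitrary: t2 S rule: fwd.induct)
  case (act X a k) then show ?case by (auto intro: conn.intros)
next
  case (pre X t X' k a) then show ?case by (auto elim: fwd_KeyedE)
next
  case (res X t X' l) then show ?case by (auto elim: fwd_ResE)
next
  case (parL X t X' Y)
  from parL.prems show ?case
    by (cases rule: fwd_ParE)
      (use parL conn.P2[of DL] in \<open>auto intro: conn.intros\<close>)
next
  case (parR X t X' Y)
  from parR.prems show ?case
    by (cases rule: fwd_ParE)
      (use parR conn.P2[of DR] in \<open>auto intro: conn.intros\<close>)
next
  case (syn X t1 X' Y t2 Y' l k)
  from syn.prems show ?case
    by (cases rule: fwd_ParE)
      (use syn in \<open>auto intro: conn_PSyn_PPar conn.S3\<close>)
next
  case (sumL X t X' Y)
  from sumL.prems show ?case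
    by (cases rule: fwd_SumE)
      (use sumL fwd_key_in_tgt[OF sumL.hyps(1)] in \<open>auto intro: conn.intros\<close>)
next
  case (sumR X t X' Y)
  from sumR.prems show ?case
    by (cases rule: fwd_SumE)
      (use sumR fwd_key_in_tgt[OF sumR.hyps(1)] in \<open>auto intro: conn.intros\<close>)
qed

lemma fwd_swap: "fwd P t1 Q \<Longrightarrow> fwd Q v S \<Longrightarrow> \<not> dep t1 v \<Longrightarrow> \<exists>R. fwd P v R \<and> fwd R t1 S"
proof (induction arbitrary: v S rule: fwd.induct)
  case (act X a k) then show ?case by (simp add: dep.A1)
next
  case (pre X t X' k a)
  obtain X'' where S: "S = Keyed a k X''" "fwd X' v X''" "pkey v \<noteq> k"
    using pre.prems(1) by (auto elim: fwd_KeyedE)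
  then obtain R where "fwd X v R" "fwd R t X''" using pre.IH pre.prems by blast
  then show ?case using S pre.hyps by (auto intro: fwd.pre)
next
  case (res X t X' l)
  obtain X'' where S: "S = Res X'' l" "fwd X' v X''" "lab v \<noteq> Vis l" "lab v \<noteq> Vis (vbar l)"
    using res.prems(1) by (auto elim: fwd_ResE)
  then obtain R where "fwd X v R" "fwd R t X''" using res.IH res.prems by blast
  then show ?case using S res.hyps by (auto intro: fwd.res)
next
  case (parL X t X' Y)
  note kt = fwd_keys[OF parL.hyps(1)]
  from parL.prems(1) show ?case
  proof (cases rule: fwd_ParE)
    case (left u X'')
    then obtain R where "fwd X u R" "fwd R t X''"
      using parL.IH[of u X''] parL.prems by (auto simp: dep_simps)
    then show ?thesis using left parL.hyps by (auto intro: fwd.parL)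
  next
    case (right u Y')
    have "fwd (Par X Y) v (Par X Y')" using right kt by (auto intro: fwd.parR)
    moreover have "fwd (Par X Y') (PPar DL t) (Par X' Y')"
      using right kt fwd_keys[OF right(3)] parL.hyps by (auto intro!: fwd.parL)
    ultimately show ?thesis using right by auto
  next
    case (sync c X'' d Y' l)
    then obtain R where R: "fwd X c R" "fwd R t X''"
      using parL.IH parL.prems by (auto simp: dep_simps)
    have "fwd (Par X Y) v (Par R Y')" using sync R by (auto intro: fwd.syn)
    moreover have "fwd (Par R Y') (PPar DL t) (Par X'' Y')"
      using R sync kt fwd_keys[OF sync(3)] fwd_keys[OF sync(4)] parL.hyps by (auto intro!: fwd.parL)
    ultimately show ?thesis using sync by auto
  qed
next
  case (parR X t X' Y)
  note kt = fwd_keys[OF parR.hyps(1)]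
  from parR.prems(1) show ?case
  proof (cases rule: fwd_ParE)
    case (right u X'')
    then obtain R where "fwd X u R" "fwd R t X''"
      using parR.IH[of u X''] parR.prems by (auto simp: dep_simps)
    then show ?thesis using right parR.hyps by (auto intro: fwd.parR)
  next
    case (left u Y')
    have "fwd (Par Y X) v (Par Y' X)" using left kt by (auto intro: fwd.parL)
    moreover have "fwd (Par Y' X) (PPar DR t) (Par Y' X')"
      using left kt fwd_keys[OF left(3)] parR.hyps by (auto intro!: fwd.parR)
    ultimately show ?thesis using left by auto
  next
    case (sync d Y' c X'' l)
    then obtain R where R: "fwd X c R" "fwd R t X''"
      using parR.IH parR.prems by (auto simp: dep_simps)
    have "fwd (Par Y X) v (Par Y' R)" using sync R by (auto intro: fwd.syn)
    moreover have "fwd (Par Y' R) (PPar DR t) (Par Y' X'')"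
      using R sync kt fwd_keys[OF sync(3)] fwd_keys[OF sync(4)] parR.hyps by (auto intro!: fwd.parR)
    ultimately show ?thesis using sync by auto
  qed
next
  case (syn X a X' Y b Y' l k)
  from syn.prems(1) show ?case
  proof (cases rule: fwd_ParE)
    case (left u X'')
    then obtain R where R: "fwd X u R" "fwd R a X''"
      using syn.IH(1)[of u X''] syn.prems by (auto simp: dep_simps)
    have "fwd (Par X Y) v (Par R Y)"
      using left R fwd_keys[OF syn.hyps(2)] by (auto intro!: fwd.parL)
    moreover have "fwd (Par R Y) (PSyn a b) (Par X'' Y')" using R syn.hyps by (auto intro: fwd.syn)
    ultimately show ?thesis using left by auto
  next
    case (right u Y'')
    then obtain R where R: "fwd Y u R" "fwd R b Y''"
      using syn.IH(2)[of u Y''] syn.prems by (auto simp: dep_simps)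
    have "fwd (Par X Y) v (Par X R)"
      using right R fwd_keys[OF syn.hyps(1)] by (auto intro!: fwd.parR)
    moreover have "fwd (Par X R) (PSyn a b) (Par X' Y'')" using R syn.hyps by (auto intro: fwd.syn)
    ultimately show ?thesis using right by auto
  next
    case (sync c X'' d Y'' l')
    have "conn a c" "conn b d" using fwd_fwd_conn sync syn.hyps by blast+
    then have "\<not> dep a c" "\<not> dep b d" using syn.prems sync by (auto simp: dep_simps)
    then obtain R1 R2 where R: "fwd X c R1" "fwd R1 a X''" "fwd Y d R2" "fwd R2 b Y''"
      using syn.IH sync by blast
    have "fwd (Par X Y) v (Par R1 R2)" using R sync by (auto intro: fwd.syn)
    moreover have "fwd (Par R1 R2) (PSyn a b) (Par X'' Y'')"
      using R syn.hyps by (auto intro: fwd.syn)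
    ultimately show ?thesis using sync by auto
  qed
next
  case (sumL X t X' Y)
  from sumL.prems(1) show ?case
  proof (cases rule: fwd_SumE)
    case (left u X'')
    then obtain R where "fwd X u R" "fwd R t X''"
      using sumL.IH[of u X''] sumL.prems by (auto simp: dep_simps)
    then show ?thesis using left sumL.hyps by (auto intro: fwd.sumL)
  next
    case (right u Y') then show ?thesis using fwd_key_in_tgt[OF sumL.hyps(1)] by auto
  qed
next
  case (sumR X t X' Y)
  from sumR.prems(1) show ?case
  proof (cases rule: fwd_SumE)
    case (right u X'')
    then obtain R where "fwd X u R" "fwd R t X''"
      using sumR.IH[of u X''] sumR.prems by (auto simp: dep_simps)
    then show ?thesis using right sumR.hyps by (auto intro: fwd.sumR)
  next
    case (left u Y') then show ?thesis using fwd_key_in_tgt[OF sumR.hyps(1)] by auto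
  qed
qed

lemma fwd_backward_deterministic:
  "fwd S1 t1 T \<Longrightarrow> fwd S2 t2 T \<Longrightarrow> pkey t1 = pkey t2 \<Longrightarrow> S1 = S2 \<and> t1 = t2"
proof (induction arbitrary: S2 t2 rule: fwd.induct)
  case (act X a k)
  from act.prems(1) show ?case
  proof (cases rule: fwd_into_KeyedE)
    case prefix then show ?thesis by simp
  next
    case (inner X0) then show ?thesis using fwd_key_in_tgt[OF inner(2)] act.hyps by simp
  qed
next
  case (pre X t X' k a)
  from pre.prems(1) show ?case
  proof (cases rule: fwd_into_KeyedE)
    case prefix then show ?thesis using fwd_key_in_tgt[OF pre.hyps(1)] by simp
  next
    case (inner X0) then show ?thesis using pre.IH[of X0 t2] pre.prems by simp
  qed
next
  case (res X t X' l)
  from res.prems(1) show ?case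
    by (cases rule: fwd_into_ResE) (use res.IH res.prems in auto)
next
  case (parL X t X' Y)
  from parL.prems(1) show ?case
  proof (cases rule: fwd_into_ParE)
    case (left X0 u) then show ?thesis using parL.IH[of X0 u] parL.prems by simp
  next
    case (right Y0 u) then show ?thesis
      using parL.prems fwd_key_in_tgt[OF right(3)] parL.hyps by simp
  next
    case (sync X0 a Y0 b l) then show ?thesis
      using parL.prems fwd_key_in_tgt[OF sync(4)] parL.hyps by simp
  qed
next
  case (parR X t X' Y)
  from parR.prems(1) show ?case
  proof (cases rule: fwd_into_ParE)
    case (right X0 u) then show ?thesis using parR.IH[of X0 u] parR.prems by simp
  next
    case (left Y0 u) then show ?thesis using parR.prems fwd_key_in_tgt[OF left(3)] parR.hyps by simp
  next
    case (sync Y0 a X0 b l) then show ?thesis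
      using parR.prems fwd_key_in_tgt[OF sync(3)] parR.hyps by simp
  qed
next
  case (syn X a X' Y b Y' l k)
  from syn.prems(1) show ?case
  proof (cases rule: fwd_into_ParE)
    case (left X0 u) then show ?thesis
      using syn.prems fwd_key_in_tgt[OF syn.hyps(2)] syn.hyps by simp
  next
    case (right Y0 u) then show ?thesis
      using syn.prems fwd_key_in_tgt[OF syn.hyps(1)] syn.hyps by simp
  next
    case (sync X0 c Y0 d l')
    then show ?thesis using syn.IH(1)[of X0 c] syn.IH(2)[of Y0 d] syn.prems syn.hyps by simp
  qed
next
  case (sumL X t X' Y)
  from sumL.prems(1) show ?case
  proof (cases rule: fwd_into_SumE)
    case (left X0 u) then show ?thesis using sumL.IH[of X0 u] sumL.prems by simp
  next
    case (right Y0 u) then show ?thesis using fwd_key_in_tgt[OF sumL.hyps(1)] by simp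
  qed
next
  case (sumR X t X' Y)
  from sumR.prems(1) show ?case
  proof (cases rule: fwd_into_SumE)
    case (right X0 u) then show ?thesis using sumR.IH[of X0 u] sumR.prems by simp
  next
    case (left Y0 u) then show ?thesis using fwd_key_in_tgt[OF sumR.hyps(1)] by simp
  qed
qed

lemma fwd_backward_diamond: "fwd S1 t1 T \<Longrightarrow> fwd S2 t2 T \<Longrightarrow> pkey t1 \<noteq> pkey t2 \<Longrightarrow>
   ind t1 t2 \<and> (\<exists>R. fwd R t2 S1 \<and> fwd R t1 S2)"
proof (induction arbitrary: S2 t2 rule: fwd.induct)
  case (act X a k)
  from act.prems(1) show ?case
  proof (cases rule: fwd_into_KeyedE)
    case prefix then show ?thesis using act.prems by simp
  next
    case (inner X0) then show ?thesis using fwd_key_in_tgt[OF inner(2)] act.hyps by simp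
  qed
next
  case (pre X t X' k a)
  from pre.prems(1) show ?case
  proof (cases rule: fwd_into_KeyedE)
    case prefix then show ?thesis using fwd_key_in_tgt[OF pre.hyps(1)] by simp
  next
    case (inner X0)
    then obtain R0 where "ind t t2" "fwd R0 t2 X" "fwd R0 t X0"
      using pre.IH[of X0 t2] pre.prems by blast
    then show ?thesis using inner pre.hyps by (auto intro: fwd.pre)
  qed
next
  case (res X t X' l)
  from res.prems(1) show ?case
  proof (cases rule: fwd_into_ResE)
    case (inner X0)
    then obtain R0 where "ind t t2" "fwd R0 t2 X" "fwd R0 t X0"
      using res.IH[of X0 t2] res.prems by blast
    then show ?thesis using inner res.hyps by (auto intro: fwd.res)
  qed
next
  case (parL X t X' Y)
  note kt = fwd_keys[OF parL.hyps(1)]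
  from parL.prems(1) show ?case
  proof (cases rule: fwd_into_ParE)
    case (left X0 u)
    then obtain R0 where "ind t u" "fwd R0 u X" "fwd R0 t X0"
      using parL.IH[of X0 u] parL.prems by auto
    then show ?thesis using left parL.hyps by (auto intro: fwd.parL ind.P1)
  next
    case (right Y0 u)
    have "fwd (Par X Y0) (PPar DR u) (Par X Y)" using right kt by (auto intro: fwd.parR)
    moreover have "fwd (Par X Y0) (PPar DL t) (Par X' Y0)"
      using right parL.hyps fwd_keys[OF right(3)] by (auto intro: fwd.parL)
    moreover have "ind (PPar DL t) (PPar DR u)"
      using parL.prems right by (auto intro: ind_dir_intros)
    ultimately show ?thesis using right by auto
  next
    case (sync X0 a Y0 b l)
    then obtain R0 where R0: "ind t a" "fwd R0 a X" "fwd R0 t X0"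
      using parL.IH[of X0 a] parL.prems by auto
    have "fwd (Par R0 Y0) (PSyn a b) (Par X Y)" using R0 sync by (auto intro: fwd.syn)
    moreover have "fwd (Par R0 Y0) (PPar DL t) (Par X0 Y0)"
      using R0 sync parL.hyps fwd_keys[OF sync(4)] by (auto intro: fwd.parL)
    moreover have "ind (PPar DL t) (PSyn a b)" using R0 by (auto intro: ind_dir_intros)
    ultimately show ?thesis using sync by auto
  qed
next
  case (parR X t X' Y)
  note kt = fwd_keys[OF parR.hyps(1)]
  from parR.prems(1) show ?case
  proof (cases rule: fwd_into_ParE)
    case (right X0 u)
    then obtain R0 where "ind t u" "fwd R0 u X" "fwd R0 t X0"
      using parR.IH[of X0 u] parR.prems by auto
    then show ?thesis using right parR.hyps by (auto intro: fwd.parR ind.P1)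
  next
    case (left Y0 u)
    have "fwd (Par Y0 X) (PPar DL u) (Par Y X)" using left kt by (auto intro: fwd.parL)
    moreover have "fwd (Par Y0 X) (PPar DR t) (Par Y0 X')"
      using left parR.hyps fwd_keys[OF left(3)] by (auto intro: fwd.parR)
    moreover have "ind (PPar DR t) (PPar DL u)"
      using parR.prems left by (auto intro: ind_dir_intros)
    ultimately show ?thesis using left by auto
  next
    case (sync Y0 b X0 a l)
    then obtain R0 where R0: "ind t a" "fwd R0 a X" "fwd R0 t X0"
      using parR.IH[of X0 a] parR.prems by auto
    have "fwd (Par Y0 R0) (PSyn b a) (Par Y X)" using R0 sync by (auto intro: fwd.syn)
    moreover have "fwd (Par Y0 R0) (PPar DR t) (Par Y0 X0)"
      using R0 sync parR.hyps fwd_keys[OF sync(3)] by (auto intro: fwd.parR)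
    moreover have "ind (PPar DR t) (PSyn b a)" using R0 by (auto intro: ind_dir_intros)
    ultimately show ?thesis using sync by auto
  qed
next
  case (syn X a X' Y b Y' l k)
  from syn.prems(1) show ?case
  proof (cases rule: fwd_into_ParE)
    case (left X0 u)
    then obtain R0 where R0: "ind a u" "fwd R0 u X" "fwd R0 a X0"
      using syn.IH(1)[of X0 u] syn.prems by auto
    have "fwd (Par R0 Y) (PPar DL u) (Par X Y)"
      using R0 left fwd_keys[OF syn.hyps(2)] by (auto intro: fwd.parL)
    moreover have "fwd (Par R0 Y) (PSyn a b) (Par X0 Y')"
      using R0 left syn.hyps by (auto intro: fwd.syn)
    moreover have "ind (PSyn a b) (PPar DL u)" using R0 by (auto intro: ind_dir_intros)
    ultimately show ?thesis using left by auto
  next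
    case (right Y0 u)
    then obtain R0 where R0: "ind b u" "fwd R0 u Y" "fwd R0 b Y0"
      using syn.IH(2)[of Y0 u] syn.prems syn.hyps by auto
    have "fwd (Par X R0) (PPar DR u) (Par X Y)"
      using R0 right fwd_keys[OF syn.hyps(1)] by (auto intro: fwd.parR)
    moreover have "fwd (Par X R0) (PSyn a b) (Par X' Y0)"
      using R0 right syn.hyps by (auto intro: fwd.syn)
    moreover have "ind (PSyn a b) (PPar DR u)" using R0 by (auto intro: ind_dir_intros)
    ultimately show ?thesis using right by auto
  next
    case (sync X0 c Y0 d l')
    then obtain R1 R2 where R: "ind a c" "fwd R1 c X" "fwd R1 a X0"
        "ind b d" "fwd R2 d Y" "fwd R2 b Y0"
      using syn.IH(1)[of X0 c] syn.IH(2)[of Y0 d] syn.prems syn.hyps by auto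
    have "fwd (Par R1 R2) (PSyn c d) (Par X Y)" using R sync by (auto intro: fwd.syn)
    moreover have "fwd (Par R1 R2) (PSyn a b) (Par X0 Y0)" using R syn.hyps by (auto intro: fwd.syn)
    moreover have "ind (PSyn a b) (PSyn c d)" using R by (auto intro: ind.S3)
    ultimately show ?thesis using sync by auto
  qed
next
  case (sumL X t X' Y)
  from sumL.prems(1) show ?case
  proof (cases rule: fwd_into_SumE)
    case (left X0 u)
    then obtain R0 where "ind t u" "fwd R0 u X" "fwd R0 t X0"
      using sumL.IH[of X0 u] sumL.prems by auto
    then show ?thesis using left sumL.hyps by (auto intro: fwd.sumL ind.C1)
  next
    case (right Y0 u) then show ?thesis using fwd_key_in_tgt[OF sumL.hyps(1)] by simp
  qed
next
  case (sumR X t X' Y)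
  from sumR.prems(1) show ?case
  proof (cases rule: fwd_into_SumE)
    case (right X0 u)
    then obtain R0 where "ind t u" "fwd R0 u X" "fwd R0 t X0"
      using sumR.IH[of X0 u] sumR.prems by auto
    then show ?thesis using right sumR.hyps by (auto intro: fwd.sumR ind.C1)
  next
    case (left Y0 u) then show ?thesis using fwd_key_in_tgt[OF sumR.hyps(1)] by simp
  qed
qed

text \<open>(k, k') \<in> key_prec P: the action keyed k' was performed under the prefix keyed k,
  hence after it.\<close>

fun key_prec :: "'n proc \<Rightarrow> (key \<times> key) set" where
  "key_prec Nil0 = {}"
| "key_prec (Pre a X) = key_prec X"
| "key_prec (Res X l) = key_prec X"
| "key_prec (Sum X Y) = key_prec X \<union> key_prec Y"
| "key_prec (Par X Y) = key_prec X \<union> key_prec Y"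
| "key_prec (Keyed a k X) = {k} \<times> keys X \<union> key_prec X"

fun restrict_keys :: "key set \<Rightarrow> 'n proc \<Rightarrow> 'n proc" where
  "restrict_keys K Nil0 = Nil0"
| "restrict_keys K (Pre a X) = Pre a (restrict_keys K X)"
| "restrict_keys K (Res X l) = Res (restrict_keys K X) l"
| "restrict_keys K (Sum X Y) = Sum (restrict_keys K X) (restrict_keys K Y)"
| "restrict_keys K (Par X Y) = Par (restrict_keys K X) (restrict_keys K Y)"
| "restrict_keys K (Keyed a k X) =
     (if k \<in> K then Keyed a k (restrict_keys K X) else Pre a (restrict_keys K X))"

definition causal_past :: "'n proc \<Rightarrow> key \<Rightarrow> key set" where
  "causal_past P k = {x. (x, k) \<in> (key_prec P)\<^sup>*}"

definition causal_cut :: "'n proc \<Rightarrow> key \<Rightarrow> 'n proc" where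
  "causal_cut P k = restrict_keys (causal_past P k) P"

lemma key_prec_keys: "key_prec P \<subseteq> keys P \<times> keys P"
  by (induction P) auto

lemma fwd_key_prec:
  "fwd P t Q \<Longrightarrow> \<exists>A \<subseteq> keys P. key_prec Q = key_prec P \<union> A \<times> {pkey t}"
proof (induction rule: fwd.induct)
  case (act X a k)
  then show ?case using key_prec_keys[of X] by auto
next
  case (pre X t X' k a)
  then obtain A where "A \<subseteq> keys X" "key_prec X' = key_prec X \<union> A \<times> {pkey t}" by blast
  then show ?case using fwd_keys[OF pre.hyps(1)] by (intro exI[of _ "insert k A"]) auto
next
  case (syn X t1 X' Y t2 Y' l k)
  then obtain A B where "A \<subseteq> keys X" "key_prec X' = key_prec X \<union> A \<times> {k}"
    "B \<subseteq> keys Y" "key_prec Y' = key_prec Y \<union> B \<times> {k}" by auto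
  then show ?case using syn.hyps(5) by (intro exI[of _ "A \<union> B"]) auto
next
  case (res X t X' l)
  then show ?case by simp
next
  case (parL X t X' Y)
  then obtain A where "A \<subseteq> keys X" "key_prec X' = key_prec X \<union> A \<times> {pkey t}" by blast
  then show ?case by (intro exI[of _ A]) auto
next
  case (parR X t X' Y)
  then obtain A where "A \<subseteq> keys X" "key_prec X' = key_prec X \<union> A \<times> {pkey t}" by blast
  then show ?case by (intro exI[of _ A]) auto
next
  case (sumL X t X' Y)
  then obtain A where "A \<subseteq> keys X" "key_prec X' = key_prec X \<union> A \<times> {pkey t}" by blast
  then show ?case by (intro exI[of _ A]) auto
next
  case (sumR X t X' Y)
  then obtain A where "A \<subseteq> keys X" "key_prec X' = key_prec X \<union> A \<times> {pkey t}" by blast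
  then show ?case by (intro exI[of _ A]) auto
qed

lemma keys_restrict_keys: "keys (restrict_keys K P) = keys P \<inter> K"
  by (induction P) auto

lemma key_prec_restrict_keys: "key_prec (restrict_keys K P) = key_prec P \<inter> K \<times> K"
  by (induction P) (auto simp: keys_restrict_keys)

lemma restrict_keys_restrict_keys: "restrict_keys A (restrict_keys B P) = restrict_keys (A \<inter> B) P"
  by (induction P) auto

lemma restrict_keys_id: "keys P \<subseteq> K \<Longrightarrow> restrict_keys K P = P"
  by (induction P) auto

lemma restrict_keys_fwd: "fwd P t Q \<Longrightarrow> pkey t \<notin> K \<Longrightarrow> restrict_keys K Q = restrict_keys K P"
  by (induction rule: fwd.induct) auto

lemma dep_key_prec: "fwd P t1 Q \<Longrightarrow> fwd Q v S \<Longrightarrow> dep t1 v \<Longrightarrow> (pkey t1, pkey v) \<in> key_prec S"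
proof (induction arbitrary: v S rule: fwd.induct)
  case (act X a k)
  from act.prems show ?case by (cases rule: fwd_KeyedE) (auto dest: fwd_key_in_tgt)
next
  case (pre X t X' k a) then show ?case by (auto elim: fwd_KeyedE)
next
  case (res X t X' l) then show ?case by (auto elim: fwd_ResE)
next
  case (parL X t X' Y)
  from parL.prems show ?case
    by (cases rule: fwd_ParE)
      (use parL fwd_key_in_tgt[OF parL.hyps(1)] in \<open>fastforce simp: dep_simps\<close>)+
next
  case (parR X t X' Y)
  from parR.prems show ?case
    by (cases rule: fwd_ParE)
      (use parR fwd_key_in_tgt[OF parR.hyps(1)] in \<open>fastforce simp: dep_simps\<close>)+
next
  case (syn X t1 X' Y t2 Y' l k)
  from syn.prems show ?case
    by (cases rule: fwd_ParE)
      (use syn in \<open>fastforce simp: dep_simps\<close>)+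
next
  case (sumL X t X' Y)
  from sumL.prems show ?case
    by (cases rule: fwd_SumE)
      (use sumL fwd_key_in_tgt[OF sumL.hyps(1)] in \<open>fastforce simp: dep_simps\<close>)+
next
  case (sumR X t X' Y)
  from sumR.prems show ?case
    by (cases rule: fwd_SumE)
      (use sumR fwd_key_in_tgt[OF sumR.hyps(1)] in \<open>fastforce simp: dep_simps\<close>)+
qed

lemma causal_past_fwd:
  assumes "fwd P t Q" "k \<noteq> pkey t"
  shows "causal_past Q k = causal_past P k"
proof -
  obtain A where "A \<subseteq> keys P" and A: "key_prec Q = key_prec P \<union> A \<times> {pkey t}"
    using fwd_key_prec[OF assms(1)] by blast
  moreover have "pkey t \<notin> keys P" using fwd_keys[OF assms(1)] by blast
  ultimately have leaf: "(pkey t, z) \<notin> key_prec Q" for z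
    using key_prec_keys[of P] by blast
  have "(x, k) \<in> (key_prec P)\<^sup>*" if "(x, k) \<in> (key_prec Q)\<^sup>*" for x
    using that
  proof (induction rule: converse_rtrancl_induct)
    case (step y z)
    have "z \<noteq> pkey t"
      using step.hyps(2) assms(2) leaf by (metis converse_rtranclE)
    then have "(y, z) \<in> key_prec P" using A step.hyps(1) by blast
    then show ?case using step.IH by (rule converse_rtrancl_into_rtrancl)
  qed simp
  moreover have "(key_prec P)\<^sup>* \<subseteq> (key_prec Q)\<^sup>*" using A by (simp add: rtrancl_mono)
  ultimately show ?thesis unfolding causal_past_def by blast
qed

lemma causal_past_subset: "causal_past P k \<subseteq> insert k (keys P)"
proof
  fix x assume "x \<in> causal_past P k"
  then have "x = k \<or> (\<exists>y. (x, y) \<in> key_prec P)"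
    unfolding causal_past_def by (blast elim: converse_rtranclE)
  then show "x \<in> insert k (keys P)" using key_prec_keys by blast
qed

lemma causal_cut_fwd:
  assumes "fwd P t Q" "k \<in> keys P"
  shows "causal_cut Q k = causal_cut P k"
proof -
  have k: "k \<noteq> pkey t" using fwd_keys[OF assms(1)] assms(2) by auto
  then have "pkey t \<notin> causal_past P k"
    using causal_past_subset[of P k] fwd_keys[OF assms(1)] by auto
  then show ?thesis
    unfolding causal_cut_def causal_past_fwd[OF assms(1) k]
    using restrict_keys_fwd[OF assms(1)] by simp
qed

lemma causal_past_trans: "k' \<in> causal_past P k \<Longrightarrow> causal_past P k' \<subseteq> causal_past P k"
  unfolding causal_past_def by (auto intro: rtrancl_trans)

lemma causal_past_causal_cut:
  assumes "k' \<in> causal_past P k"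
  shows "causal_past (causal_cut P k) k' = causal_past P k'"
proof -
  let ?K = "causal_past P k"
  have "(x, k') \<in> (key_prec P \<inter> ?K \<times> ?K)\<^sup>*" if "(x, k') \<in> (key_prec P)\<^sup>*" for x
    using that
  proof (induction rule: converse_rtrancl_induct)
    case (step y z)
    have "z \<in> ?K" "y \<in> ?K"
      using step.hyps assms causal_past_trans[OF assms] unfolding causal_past_def
      by (auto intro: converse_rtrancl_into_rtrancl rtrancl_trans)
    then show ?case using step by (meson IntI SigmaI converse_rtrancl_into_rtrancl)
  qed simp
  moreover have "(key_prec P \<inter> ?K \<times> ?K)\<^sup>* \<subseteq> (key_prec P)\<^sup>*"
    by (simp add: rtrancl_mono)
  ultimately show ?thesis
    unfolding causal_cut_def causal_past_def key_prec_restrict_keys by blast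
qed

lemma causal_cut_causal_cut:
  assumes "k' \<in> causal_past P k"
  shows "causal_cut (causal_cut P k) k' = causal_cut P k'"
  using causal_past_causal_cut[OF assms] causal_past_trans[OF assms]
  by (simp add: causal_cut_def restrict_keys_restrict_keys Int_absorb2)

lemma causal_past_self: "k \<in> causal_past P k"
  by (simp add: causal_past_def)

lemma causal_past_eq_if_causal_cut_eq:
  assumes "causal_cut P k = causal_cut S k"
  shows "causal_past P k = causal_past S k"
  using causal_past_causal_cut[of k P k, OF causal_past_self]
    causal_past_causal_cut[of k S k, OF causal_past_self] assms by simp

lemma causal_cut_eq_below:
  assumes "causal_cut P k = causal_cut S k" "k' \<in> causal_past S k"
  shows "causal_cut P k' = causal_cut S k'"
proof -
  have "k' \<in> causal_past P k" using assms causal_past_eq_if_causal_cut_eq by blast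
  then have "causal_cut P k' = causal_cut (causal_cut P k) k'" by (simp add: causal_cut_causal_cut)
  also have "\<dots> = causal_cut (causal_cut S k) k'" using assms(1) by simp
  also have "\<dots> = causal_cut S k'" using assms(2) by (simp add: causal_cut_causal_cut)
  finally show ?thesis .
qed

lemma keys_eq_below:
  assumes "causal_cut P k = causal_cut S k" "k' \<in> causal_past S k" "k' \<in> keys S"
  shows "k' \<in> keys P"
proof -
  have "k' \<in> keys (causal_cut S k)"
    using assms(2,3) by (simp add: causal_cut_def keys_restrict_keys)
  then have "k' \<in> keys (causal_cut P k)" using assms(1) by simp
  then show ?thesis by (simp add: causal_cut_def keys_restrict_keys)
qed

definition fwd_step :: "'n proc \<Rightarrow> 'n proc \<Rightarrow> bool" where
  "fwd_step P Q \<longleftrightarrow> (\<exists>t. fwd P t Q)"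

definition fwd_reachable :: "'n proc \<Rightarrow> bool" where
  "fwd_reachable P \<longleftrightarrow> (\<exists>Z. standard Z \<and> fwd_step\<^sup>*\<^sup>* Z P)"

lemma reachable_fwd: "reachable P \<Longrightarrow> fwd P t Q \<Longrightarrow> reachable Q"
  unfolding reachable_def by (meson rtranclp.rtrancl_into_rtrancl step_def)

lemma reachable_bwd: "reachable P \<Longrightarrow> fwd Q t P \<Longrightarrow> reachable Q"
  unfolding reachable_def by (meson rtranclp.rtrancl_into_rtrancl step_def)

lemma fwd_reachable_fwd: "fwd_reachable P \<Longrightarrow> fwd P t Q \<Longrightarrow> fwd_reachable Q"
  unfolding fwd_reachable_def by (meson rtranclp.rtrancl_into_rtrancl fwd_step_def)

text \<open>Undoing the last step of a forward computation either returns to its source (same key)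
  or, by the backward diamond, commutes with that step (different keys).\<close>

lemma fwd_reachable_bwd:
  assumes "fwd_reachable P" "fwd Q t P"
  shows "fwd_reachable Q"
proof -
  obtain Z where Z: "standard Z" "fwd_step\<^sup>*\<^sup>* Z P" using assms(1) fwd_reachable_def by blast
  from Z(2) assms(2) show ?thesis
  proof (induction arbitrary: Q t rule: rtranclp_induct)
    case base
    then show ?case using fwd_key_in_tgt Z(1) by (fastforce simp: standard_def)
  next
    case (step P' P)
    then obtain z where z: "fwd P' z P" by (auto simp: fwd_step_def)
    show ?case
    proof (cases "pkey z = pkey t")
      case True
      then have "Q = P'" using fwd_backward_deterministic[OF step.prems z] by simp
      then show ?thesis using step.hyps(1) Z(1) unfolding fwd_reachable_def by blast
    next
      case False
      then obtain R where "fwd R t P'" "fwd R z Q"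
        using fwd_backward_diamond[OF z step.prems] by blast
      then show ?thesis using step.IH fwd_reachable_fwd by blast
    qed
  qed
qed

lemma reachable_imp_fwd_reachable: "reachable P \<Longrightarrow> fwd_reachable P"
  unfolding reachable_def
proof (elim exE conjE)
  fix S assume "standard S" "step\<^sup>*\<^sup>* S P"
  from this(2) show "fwd_reachable P"
  proof (induction rule: rtranclp_induct)
    case base
    then show ?case using \<open>standard S\<close> by (auto simp: fwd_reachable_def)
  next
    case (step Q R)
    then show ?case by (auto simp: step_def intro: fwd_reachable_fwd fwd_reachable_bwd)
  qed
qed

lemma rooted_reachable_keys_empty:
  assumes "reachable P" "rooted P"
  shows "keys P = {}"
proof -
  obtain Z where Z: "standard Z" "fwd_step\<^sup>*\<^sup>* Z P"
    using reachable_imp_fwd_reachable[OF assms(1)] fwd_reachable_def by blast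
  from Z(2) show ?thesis
  proof (cases rule: rtranclp.cases)
    case rtrancl_refl then show ?thesis using Z(1) by (simp add: standard_def)
  next
    case (rtrancl_into_rtrancl b)
    then show ?thesis using assms(2) by (auto simp: fwd_step_def rooted_def)
  qed
qed

lemma is_path_Cons:
  "is_path (x # r) \<longleftrightarrow> valid x \<and> is_path r \<and> (r \<noteq> [] \<longrightarrow> tgt x = src (hd r))"
  unfolding is_path_def by (cases r) (auto simp: All_less_Suc2)

lemma fwd_steps_path:
  "fwd_step\<^sup>*\<^sup>* A B \<Longrightarrow> reachable A \<Longrightarrow>
     A = B \<or> (\<exists>r. r \<noteq> [] \<and> is_path r \<and> src (hd r) = A \<and> tgt (last r) = B)"
proof (induction rule: converse_rtranclp_induct)
  case (step A C)
  then obtain z where z: "fwd A z C" by (auto simp: fwd_step_def)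
  have vz: "valid (Tr A z C True)" using step.prems z by (simp add: valid_def)
  have "reachable C" using step.prems z reachable_fwd by blast
  then consider "C = B" | r where "r \<noteq> []" "is_path r" "src (hd r) = C" "tgt (last r) = B"
    using step.IH by blast
  then show ?case
  proof cases
    case 1
    then show ?thesis using vz by (intro disjI2 exI[of _ "[Tr A z C True]"]) (simp add: is_path_def)
  next
    case 2
    then show ?thesis
      using vz by (intro disjI2 exI[of _ "Tr A z C True # r"]) (simp add: is_path_Cons)
  qed
qed simp

lemma rooted_path_to:
  assumes "reachable P" "keys P \<noteq> {}"
  shows "\<exists>r. rooted_path r \<and> tgt (last r) = P"
proof -
  obtain Z where Z: "standard Z" "fwd_step\<^sup>*\<^sup>* Z P"
    using reachable_imp_fwd_reachable[OF assms(1)] fwd_reachable_def by blast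
  have "reachable Z" using Z(1) by (auto simp: reachable_def)
  moreover have "Z \<noteq> P" using Z(1) assms(2) by (auto simp: standard_def)
  ultimately obtain r where r: "r \<noteq> []" "is_path r" "src (hd r) = Z" "tgt (last r) = P"
    using fwd_steps_path[OF Z(2)] by blast
  have "rooted Z" using Z(1) fwd_key_in_tgt by (fastforce simp: rooted_def standard_def)
  then show ?thesis using r by (auto simp: rooted_path_def)
qed

text \<open>Induction along the forward computation reaching T. If its last step z has a key
  outside U, the induction hypothesis yields an undoable step w with key in U before z; w does not
  cause z because U is closed under causal successors, so w and z can be swapped.\<close>

lemma undoable_key_in_successor_closed:
  assumes "fwd_step\<^sup>*\<^sup>* Z T" "standard Z" "U \<subseteq> keys T" "U \<noteq> {}"
    "\<And>a b. (a, b) \<in> key_prec T \<Longrightarrow> a \<in> U \<Longrightarrow> b \<in> U"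
  shows "\<exists>R t. fwd R t T \<and> pkey t \<in> U"
  using assms
proof (induction arbitrary: U rule: rtranclp_induct)
  case base then show ?case by (auto simp: standard_def)
next
  case (step T' T)
  then obtain z where z: "fwd T' z T" by (auto simp: fwd_step_def)
  show ?case
  proof (cases "pkey z \<in> U")
    case True then show ?thesis using z by blast
  next
    case False
    obtain A where "key_prec T = key_prec T' \<union> A \<times> {pkey z}"
      using fwd_key_prec[OF z] by blast
    then have "\<And>a b. (a, b) \<in> key_prec T' \<Longrightarrow> a \<in> U \<Longrightarrow> b \<in> U" using step.prems(4) by blast
    moreover have "U \<subseteq> keys T'" using step.prems(2) fwd_keys[OF z] False by auto
    ultimately obtain R w where w: "fwd R w T'" "pkey w \<in> U" using step.IH step.prems(1,3) by blast
    have "\<not> dep w z"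
    proof
      assume "dep w z"
      then have "(pkey w, pkey z) \<in> key_prec T" using dep_key_prec[OF w(1) z] by simp
      then show False using step.prems(4) w(2) False by blast
    qed
    then obtain R' where "fwd R z R'" "fwd R' w T" using fwd_swap[OF w(1) z] by blast
    then show ?thesis using w(2) by blast
  qed
qed

lemma inv_tr_simps [simp]:
  "src (inv_tr x) = tgt x" "tgt (inv_tr x) = src x" "lbl (inv_tr x) = lbl x"
  "fw (inv_tr x) = (\<not> fw x)" "inv_tr (inv_tr x) = x"
  by (cases x; simp)+

lemma valid_fwd: "valid x \<Longrightarrow> fw x \<Longrightarrow> fwd (src x) (lbl x) (tgt x)"
  by (simp add: valid_def)

lemma valid_bwd: "valid x \<Longrightarrow> \<not> fw x \<Longrightarrow> fwd (tgt x) (lbl x) (src x)"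
  by (simp add: valid_def)

lemma valid_inv_tr: "valid x \<Longrightarrow> valid (inv_tr x)"
  unfolding valid_def by (cases x) (auto intro: reachable_fwd reachable_bwd)

lemma valid_wf_label: "valid x \<Longrightarrow> wf_label (lbl x)"
  unfolding valid_def by (auto split: if_splits intro: fwd_wf_label)

lemma valid_steps: "valid x \<Longrightarrow> step\<^sup>*\<^sup>* (src x) (tgt x)"
  unfolding valid_def step_def by (auto split: if_splits)

lemma ev_eqD: "ev_eq x y \<Longrightarrow> valid x \<and> valid y \<and> lbl x = lbl y \<and> fw x = fw y"
  by (induction rule: ev_eq.induct) (auto simp: sq_def)

lemma sq_inv_tr: "sq t t' \<Longrightarrow> sq (inv_tr t) (inv_tr t')"
proof -
  assume "sq t t'"
  then obtain u u' where A: "valid t" "valid u" "valid u'" "valid t'"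
      "src u = src t" "src u' = tgt t" "src t' = tgt u" "tgt u' = tgt t'"
      "lbl u' = lbl u" "fw u' = fw u" "lbl t' = lbl t" "fw t' = fw t" "tr_ind t u"
    unfolding sq_def by blast
  have "tr_ind (inv_tr t) u'"
    using A valid_steps[OF A(3)] unfolding tr_ind_def connected_def by simp
  then show ?thesis unfolding sq_def using A
    by (intro exI[of _ u'] exI[of _ u]) (auto intro: valid_inv_tr)
qed

lemma ev_eq_inv_tr: "ev_eq x y \<Longrightarrow> ev_eq (inv_tr x) (inv_tr y)"
proof (induction rule: ev_eq.induct)
  case (refl t) then show ?case by (auto intro: ev_eq.refl valid_inv_tr)
next
  case (sq t t') then show ?case by (auto intro: ev_eq.sq sq_inv_tr)
qed (auto intro: ev_eq.sym ev_eq.trans)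

lemma cls_eq: "ev_eq a t \<Longrightarrow> cls a = cls t"
  unfolding cls_def by (auto intro: ev_eq.sym ev_eq.trans)

lemma ev_eq_causal_cut:
  "ev_eq x y \<Longrightarrow> fw x \<Longrightarrow> causal_cut (tgt x) (pkey (lbl x)) = causal_cut (tgt y) (pkey (lbl x))"
proof (induction rule: ev_eq.induct)
  case (sq t t')
  then obtain u u' where A: "valid t" "valid u" "valid u'" "valid t'"
      "src u = src t" "src u' = tgt t" "src t' = tgt u" "tgt u' = tgt t'"
      "lbl u' = lbl u" "fw u' = fw u" "lbl t' = lbl t" "fw t' = fw t" "tr_ind t u"
    unfolding sq_def by blast
  have kt: "pkey (lbl t) \<in> keys (tgt t)" using fwd_key_in_tgt valid_fwd[OF A(1) sq.prems] by blast
  have "pkey (lbl t) \<noteq> pkey (lbl u)"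
    using A(13) valid_wf_label[OF A(1)] valid_wf_label[OF A(2)] ind_pkey_neq unfolding tr_ind_def
    by blast
  show ?case
  proof (cases "fw u'")
    case True
    then have "fwd (tgt t) (lbl u) (tgt t')" using A valid_fwd[OF A(3)] by simp
    then show ?thesis using causal_cut_fwd kt by metis
  next
    case False
    then have f: "fwd (tgt t') (lbl u) (tgt t)" using A valid_bwd[OF A(3)] by simp
    then have "pkey (lbl t) \<in> keys (tgt t')"
      using fwd_keys kt \<open>pkey (lbl t) \<noteq> pkey (lbl u)\<close> by blast
    then show ?thesis using causal_cut_fwd[OF f] by metis
  qed
next
  case (sym t t')
  then show ?case using ev_eqD[OF sym.hyps] by simp
next
  case (trans t t' t'')
  then show ?case using ev_eqD[OF trans.hyps(1)] by simp
qed simp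

lemma ev_eq_undo_later:
  assumes "reachable S" "fwd S th T" "fwd R' w T" "pkey th \<noteq> pkey w"
  obtains R where "reachable R" "fwd R th R'" "ev_eq (Tr S th T True) (Tr R th R' True)"
proof -
  obtain R where R: "ind th w" "fwd R w S" "fwd R th R'"
    using fwd_backward_diamond[OF assms(2-4)] by blast
  have "reachable R" using assms(1) R(2) reachable_bwd by blast
  moreover have "reachable T" using assms(1,2) reachable_fwd by blast
  moreover have "step S R" using R(2) by (auto simp: step_def)
  ultimately have "sq (Tr S th T True) (Tr R th R' True)"
    unfolding sq_def using assms R
    by (intro exI[of _ "Tr S w R False"] exI[of _ "Tr T w R' False"])
      (auto simp: valid_def tr_ind_def connected_def)
  then show ?thesis using that R(3) \<open>reachable R\<close> ev_eq.sq by blast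
qed

lemma undoable_key_outside_causal_past:
  assumes "reachable T" "\<not> keys T \<subseteq> causal_past T k"
  obtains R w where "fwd R w T" "pkey w \<notin> causal_past T k"
proof -
  let ?U = "keys T - causal_past T k"
  have "b \<in> ?U" if "(a, b) \<in> key_prec T" "a \<in> ?U" for a b
    using that key_prec_keys unfolding causal_past_def
    by (blast intro: converse_rtrancl_into_rtrancl)
  moreover obtain Z where "standard Z" "fwd_step\<^sup>*\<^sup>* Z T"
    using reachable_imp_fwd_reachable[OF assms(1)] fwd_reachable_def by blast
  ultimately show ?thesis
    using undoable_key_in_successor_closed[of Z T ?U] assms(2) that by blast
qed

text \<open>Undo, one by one, all transitions whose keys lie outside the causal past of the key
  of th; each undo is a square, so the event does not change.\<close>

lemma ev_eq_into_causal_cut: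
  assumes "reachable S" "fwd S th T"
  shows "\<exists>S'. fwd S' th (causal_cut T (pkey th)) \<and>
    ev_eq (Tr S th T True) (Tr S' th (causal_cut T (pkey th)) True)"
  using assms
proof (induction "card (keys T)" arbitrary: S T rule: less_induct)
  case less
  let ?k = "pkey th"
  show ?case
  proof (cases "keys T \<subseteq> causal_past T ?k")
    case True
    then have "causal_cut T ?k = T" by (simp add: causal_cut_def restrict_keys_id)
    then show ?thesis using less.prems ev_eq.refl[of "Tr S th T True"] by (auto simp: valid_def)
  next
    case False
    obtain R' w where w: "fwd R' w T" "pkey w \<notin> causal_past T ?k"
      using undoable_key_outside_causal_past[OF reachable_fwd[OF less.prems] False] by blast
    then have "?k \<noteq> pkey w" using causal_past_self by metis
    then obtain R where R: "reachable R" "fwd R th R'" "ev_eq (Tr S th T True) (Tr R th R' True)"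
      using ev_eq_undo_later[OF less.prems w(1)] by blast
    have "card (keys R') < card (keys T)"
      using fwd_keys[OF w(1)] finite_keys[of R'] by simp
    then obtain S' where "fwd S' th (causal_cut R' ?k)"
        "ev_eq (Tr R th R' True) (Tr S' th (causal_cut R' ?k) True)"
      using less.hyps R(1,2) by blast
    moreover have "causal_cut R' ?k = causal_cut T ?k"
      using causal_cut_fwd[OF w(1)] fwd_key_in_tgt[OF R(2)] by simp
    ultimately show ?thesis using R(3) ev_eq.trans by metis
  qed
qed

lemma ev_eq_fwd_iff:
  assumes "valid t" "fw t" "valid x" "fw x" "pkey (lbl x) = pkey (lbl t)"
  shows "ev_eq t x \<longleftrightarrow>
    causal_cut (tgt x) (pkey (lbl t)) = causal_cut (tgt t) (pkey (lbl t))" (is "_ \<longleftrightarrow> ?cut_eq")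
proof
  assume "ev_eq t x"
  then show ?cut_eq using ev_eq_causal_cut assms(2) by metis
next
  let ?M = "causal_cut (tgt t) (pkey (lbl t))"
  assume ?cut_eq
  have t: "Tr (src t) (lbl t) (tgt t) True = t" and x: "Tr (src x) (lbl x) (tgt x) True = x"
    using assms(2,4) tr.collapse by metis+
  obtain S1 where S1: "fwd S1 (lbl t) ?M" "ev_eq t (Tr S1 (lbl t) ?M True)"
    using ev_eq_into_causal_cut[OF _ valid_fwd[OF assms(1,2)]] assms(1) unfolding t
    by (auto simp: valid_def)
  obtain S2 where S2: "fwd S2 (lbl x) ?M" "ev_eq x (Tr S2 (lbl x) ?M True)"
    using ev_eq_into_causal_cut[OF _ valid_fwd[OF assms(3,4)]] assms(3,5) \<open>?cut_eq\<close> unfolding x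
    by (auto simp: valid_def)
  have "S1 = S2 \<and> lbl t = lbl x" using fwd_backward_deterministic[OF S1(1) S2(1)] assms(5) by simp
  then show "ev_eq t x" using S1(2) S2(2) by (metis ev_eq.sym ev_eq.trans)
qed

text \<open>occurred t P: the event of the forward transition t has happened in P. By
  ev_eq_fwd_iff this depends only on the event of t.\<close>

definition occurred :: "'n tr \<Rightarrow> 'n proc \<Rightarrow> bool" where
  "occurred t P \<longleftrightarrow>
     pkey (lbl t) \<in> keys P \<and> causal_cut P (pkey (lbl t)) = causal_cut (tgt t) (pkey (lbl t))"

lemma event_count_fwd:
  assumes "valid t" "fw t" "valid y" "fw y"
  shows "(of_bool (ev_eq t y) :: int) = of_bool (occurred t (tgt y)) - of_bool (occurred t (src y))"
proof -
  have fy: "fwd (src y) (lbl y) (tgt y)" using assms valid_fwd by blast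
  show ?thesis
  proof (cases "pkey (lbl y) = pkey (lbl t)")
    case True
    then have "\<not> occurred t (src y)" using fwd_keys[OF fy] by (auto simp: occurred_def)
    moreover have "ev_eq t y \<longleftrightarrow> occurred t (tgt y)"
      using ev_eq_fwd_iff[OF assms True] fwd_key_in_tgt[OF fy] True by (auto simp: occurred_def)
    ultimately show ?thesis by simp
  next
    case False
    then have "\<not> ev_eq t y" using ev_eqD by metis
    moreover have "occurred t (tgt y) = occurred t (src y)"
      using False fwd_keys[OF fy] causal_cut_fwd[OF fy, of "pkey (lbl t)"]
      by (auto simp: occurred_def)
    ultimately show ?thesis by simp
  qed
qed

lemma in_cls: "x \<in> cls t \<longleftrightarrow> ev_eq t x"
  by (simp add: cls_def)

lemma in_ev_bar_cls: "valid x \<Longrightarrow> x \<in> ev_bar (cls t) \<longleftrightarrow> ev_eq t (inv_tr x)"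
proof
  assume "x \<in> ev_bar (cls t)"
  then obtain y where "ev_eq t y" "ev_eq (inv_tr y) x" by (auto simp: ev_bar_def cls_def)
  then show "ev_eq t (inv_tr x)" using ev_eq_inv_tr[of "inv_tr y" x] by (auto intro: ev_eq.trans)
next
  assume "valid x" "ev_eq t (inv_tr x)"
  then show "x \<in> ev_bar (cls t)" unfolding ev_bar_def cls_def
    using ev_eq.refl[of x] by (intro UN_I[of "inv_tr x"]) auto
qed

lemma event_count_step:
  assumes "valid t" "fw t" "valid x"
  shows "(if x \<in> cls t then 1 else if x \<in> ev_bar (cls t) then -1 else 0) =
    (of_bool (occurred t (tgt x)) - of_bool (occurred t (src x)) :: int)"
proof (cases "fw x")
  case True
  then have "\<not> ev_eq t (inv_tr x)" using ev_eqD[of t "inv_tr x"] assms(2) by auto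
  then have "(if x \<in> cls t then 1 else if x \<in> ev_bar (cls t) then -1 else 0) =
      (of_bool (ev_eq t x) :: int)"
    using in_ev_bar_cls[OF assms(3)] by (simp add: in_cls)
  then show ?thesis using event_count_fwd[OF assms True] by simp
next
  case False
  then have "\<not> ev_eq t x" using ev_eqD[of t x] assms(2) by auto
  moreover have "valid (inv_tr x)" "fw (inv_tr x)" using valid_inv_tr[OF assms(3)] False by auto
  moreover have "(if x \<in> cls t then 1 else if x \<in> ev_bar (cls t) then -1 else 0) =
      - (of_bool (ev_eq t (inv_tr x)) :: int)"
    using in_ev_bar_cls[OF assms(3)] \<open>\<not> ev_eq t x\<close> by (simp add: in_cls)
  ultimately show ?thesis using event_count_fwd[OF assms(1,2), of "inv_tr x"] by simp
qed

lemma sharp_Cons: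
  "sharp (x # r) e = (if x \<in> e then 1 else if x \<in> ev_bar e then -1 else 0) + sharp r e"
  by (simp add: sharp_def)

lemma sharp_path:
  assumes "valid t" "fw t" "is_path (x # r)"
  shows "sharp (x # r) (cls t) =
    of_bool (occurred t (tgt (last (x # r)))) - of_bool (occurred t (src x))"
  using assms(3)
proof (induction r arbitrary: x)
  case Nil
  then show ?case using event_count_step[OF assms(1,2)] by (simp add: sharp_def is_path_Cons)
next
  case (Cons y r)
  then have "valid x" "tgt x = src y" "is_path (y # r)" by (simp_all add: is_path_Cons)
  then show ?case using Cons.IH event_count_step[OF assms(1,2)] by (simp add: sharp_Cons)
qed

lemma sharp_rooted_path:
  assumes "rooted_path r" "valid t" "fw t"
  shows "sharp r (cls t) = of_bool (occurred t (tgt (last r)))"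
proof -
  obtain x r' where r: "r = x # r'" "is_path (x # r')" "rooted (src x)"
    using assms(1) by (cases r) (auto simp: rooted_path_def)
  then have "reachable (src x)" by (simp add: is_path_Cons valid_def)
  then have "keys (src x) = {}" using rooted_reachable_keys_empty r(3) by blast
  then have "\<not> occurred t (src x)" by (simp add: occurred_def)
  then show ?thesis using sharp_path[OF assms(2,3) r(2)] r(1) by simp
qed

lemma dep_occurred:
  assumes "fwd P th1 Q" "fwd Q th2 S" "dep th1 th2" "occurred (Tr Q th2 S True) X"
  shows "occurred (Tr P th1 Q True) X"
proof -
  have prec: "(pkey th1, pkey th2) \<in> key_prec S" using dep_key_prec[OF assms(1-3)] .
  then have past: "pkey th1 \<in> causal_past S (pkey th2)" by (auto simp: causal_past_def)
  have "pkey th1 \<in> keys S" using prec key_prec_keys by blast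
  then have "pkey th1 \<in> keys X" 
    using keys_eq_below past assms(4) by (auto simp: occurred_def)
  moreover have "causal_cut X (pkey th1) = causal_cut S (pkey th1)"
    using causal_cut_eq_below past assms(4) by (auto simp: occurred_def)
  moreover have "causal_cut S (pkey th1) = causal_cut Q (pkey th1)"
    using causal_cut_fwd[OF assms(2)] fwd_key_in_tgt[OF assms(1)] by simp
  ultimately show ?thesis by (simp add: occurred_def)
qed

lemma fwd_event_cls:
  assumes "fwd_event e" "t \<in> e"
  shows "e = cls t" "valid t" "fw t"
proof -
  obtain a where a: "valid a" "fw a" "e = cls a" using assms(1) fwd_event_def by blast
  then have "ev_eq a t" using assms(2) by (simp add: in_cls)
  then show "e = cls t" "valid t" "fw t" using a cls_eq ev_eqD by metis+
qed

lemma composable_fwd_events: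
  assumes "fwd_event e1" "fwd_event e2" "ev_composable e1 e2"
  obtains P th1 Q th2 S where "reachable P" "fwd P th1 Q" "fwd Q th2 S"
    "e1 = cls (Tr P th1 Q True)" "e2 = cls (Tr Q th2 S True)"
proof -
  obtain t1 t2 where t: "t1 \<in> e1" "t2 \<in> e2" "tgt t1 = src t2"
    using assms(3) ev_composable_def by blast
  note v1 = fwd_event_cls[OF assms(1) t(1)] and v2 = fwd_event_cls[OF assms(2) t(2)]
  show ?thesis
  proof (rule that)
    show "reachable (src t1)" using v1(2) by (simp add: valid_def)
    show "fwd (src t1) (lbl t1) (tgt t1)" using valid_fwd v1(2,3) .
    show "fwd (tgt t1) (lbl t2) (tgt t2)" using valid_fwd v2(2,3) t(3) by simp
    show "e1 = cls (Tr (src t1) (lbl t1) (tgt t1) True)" using v1(1,3) tr.collapse by metis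
    show "e2 = cls (Tr (tgt t1) (lbl t2) (tgt t2) True)" using v2(1,3) t(3) tr.collapse by metis
  qed
qed

lemma lbl_eq_if_cls_eq:
  assumes "valid t" "cls t = cls u"
  shows "lbl t = lbl u"
proof -
  have "t \<in> cls t" using ev_eq.refl[OF assms(1)] by (simp add: in_cls)
  then have "ev_eq u t" using assms(2) by (simp add: in_cls)
  then show ?thesis using ev_eqD by metis
qed

lemma ev_dep_cls:
  assumes "valid t1" "valid t2"
  shows "ev_dep (cls t1) (cls t2) \<longleftrightarrow> dep (lbl t1) (lbl t2)"
proof
  assume "ev_dep (cls t1) (cls t2)"
  then obtain x y where "ev_eq t1 x" "ev_eq t2 y" "dep (lbl x) (lbl y)"
    by (auto simp: ev_dep_def in_cls)
  then show "dep (lbl t1) (lbl t2)" using ev_eqD[of t1 x] ev_eqD[of t2 y] by simp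
next
  assume "dep (lbl t1) (lbl t2)"
  then show "ev_dep (cls t1) (cls t2)" unfolding ev_dep_def using assms
    by (intro bexI[of _ t1] bexI[of _ t2]) (auto simp: in_cls intro: ev_eq.refl)
qed

lemma ev_le_if_dep:
  assumes "reachable P" "fwd P th1 Q" "fwd Q th2 S" "dep th1 th2"
  shows "ev_le (cls (Tr P th1 Q True)) (cls (Tr Q th2 S True))"
  unfolding ev_le_def
proof (intro allI impI)
  fix r assume r: "rooted_path r" "0 < sharp r (cls (Tr Q th2 S True))"
  have valid: "valid (Tr P th1 Q True)" "valid (Tr Q th2 S True)"
    using assms(1-3) reachable_fwd by (auto simp: valid_def)
  have "occurred (Tr Q th2 S True) (tgt (last r))"
    using r sharp_rooted_path[OF r(1) valid(2)] by (simp split: if_splits)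
  then have "occurred (Tr P th1 Q True) (tgt (last r))" by (rule dep_occurred[OF assms(2-4)])
  then show "0 < sharp r (cls (Tr P th1 Q True))" using sharp_rooted_path[OF r(1) valid(1)] by simp
qed

lemma not_ev_le_if_not_dep:
  assumes "reachable P" "fwd P th1 Q" "fwd Q th2 S" "\<not> dep th1 th2"
  shows "\<not> ev_le (cls (Tr P th1 Q True)) (cls (Tr Q th2 S True))"
proof -
  obtain R where R: "fwd P th2 R" "fwd R th1 S" using fwd_swap[OF assms(2-4)] by blast
  have "reachable R" using assms(1) R(1) reachable_fwd by blast
  moreover have k2: "pkey th2 \<in> keys R" using fwd_key_in_tgt[OF R(1)] .
  ultimately obtain r where r: "rooted_path r" "tgt (last r) = R"
    using rooted_path_to by blast
  have valid: "valid (Tr P th1 Q True)" "valid (Tr Q th2 S True)"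
    using assms(1-3) reachable_fwd by (auto simp: valid_def)
  have "occurred (Tr Q th2 S True) R"
    using k2 causal_cut_fwd[OF R(2) k2] by (simp add: occurred_def)
  then have "sharp r (cls (Tr Q th2 S True)) = 1"
    using sharp_rooted_path[OF r(1) valid(2)] r(2) by simp
  moreover have "\<not> occurred (Tr P th1 Q True) R"
    using fwd_keys[OF R(1)] fwd_keys[OF assms(2)] fwd_keys[OF assms(3)] by (auto simp: occurred_def)
  then have "sharp r (cls (Tr P th1 Q True)) = 0"
    using sharp_rooted_path[OF r(1) valid(1)] r(2) by simp
  ultimately show ?thesis unfolding ev_le_def using r(1) by auto
qed

theorem lemma7p2:
  fixes e1 e2 :: "'n tr set"
  assumes "fwd_event e1" and "fwd_event e2" and "ev_composable e1 e2"
  shows "ev_less e1 e2 \<longleftrightarrow> ev_dep e1 e2"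
proof -
  obtain P th1 Q th2 S where steps: "reachable P" "fwd P th1 Q" "fwd Q th2 S"
    and e: "e1 = cls (Tr P th1 Q True)" "e2 = cls (Tr Q th2 S True)"
    using composable_fwd_events[OF assms] .
  have valid: "valid (Tr P th1 Q True)" "valid (Tr Q th2 S True)"
    using steps reachable_fwd by (auto simp: valid_def)
  have "pkey th1 \<noteq> pkey th2" using fwd_keys[OF steps(2)] fwd_keys[OF steps(3)] by auto
  then have "e1 \<noteq> e2" using lbl_eq_if_cls_eq[OF valid(1)] unfolding e by auto
  moreover have "ev_dep e1 e2 \<longleftrightarrow> dep th1 th2" unfolding e using ev_dep_cls[OF valid] by simp
  moreover have "ev_le e1 e2 \<longleftrightarrow> dep th1 th2"
    unfolding e using ev_le_if_dep[OF steps] not_ev_le_if_not_dep[OF steps] by blast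
  ultimately show ?thesis unfolding ev_less_def by blast
qed

end
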